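(* Let $n\ge 3$, let $b_1,\dots,b_{n-1}\in\mathbb{C}$, and let $B\in M_n(\mathbb{C})$ be the matrix with $B_{i,i+1}=b_i$, $B_{i+1,i}=-\bar b_i$ for $i=1,\dots,n-1$, and all other entries equal to $0$. Then the operator norm of $B$ satisfies $$\max_{1\le i\le n-2}\sqrt{|b_i|^2+|b_{i+1}|^2}\le\|B\|,\qquad \frac{2}{n}\sum_{i=1}^{n-1}|b_i|\le\|B\|,$$ $$\|B\|\le\max_{1\le i\le n-2}\big(|b_i|+|b_{i+1}|\big),\qquad \|B\|\le 2\cos\Big(\frac{\pi}{n+1}\Big)\max_{1\le i\le n-1}|b_i|.$$ *)

theory Defs
  imports "HOL-Analysis.Analysis"
begin

text \<open>Vectors in C^n are represented as functions nat => complex, only indices i < n matter;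
  n x n matrices as nat => nat => complex, only indices i, j < n matter (0-based).\<close>

definition vec_norm :: "nat \<Rightarrow> (nat \<Rightarrow> complex) \<Rightarrow> real" where
  "vec_norm n x = sqrt (\<Sum>i<n. (cmod (x i))\<^sup>2)"

definition mat_vec :: "nat \<Rightarrow> (nat \<Rightarrow> nat \<Rightarrow> complex) \<Rightarrow> (nat \<Rightarrow> complex) \<Rightarrow> (nat \<Rightarrow> complex)" where
  "mat_vec n A x = (\<lambda>i. \<Sum>j<n. A i j * x j)"

definition op_norm :: "nat \<Rightarrow> (nat \<Rightarrow> nat \<Rightarrow> complex) \<Rightarrow> real" where
  "op_norm n A = Sup {vec_norm n (mat_vec n A x) | x. vec_norm n x \<le> 1}"

text \<open>The skew-type tridiagonal matrix: B(i,i+1) = b i, B(i+1,i) = - cnj (b i) for i < n-1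
  (0-based; b 0 .. b (n-2) correspond to b_1 .. b_(n-1)).\<close>
definition tridiag :: "nat \<Rightarrow> (nat \<Rightarrow> complex) \<Rightarrow> nat \<Rightarrow> nat \<Rightarrow> complex" where
  "tridiag n b i j =
     (if j = i + 1 \<and> i + 1 < n then b i
      else if i = j + 1 \<and> j + 1 < n then - cnj (b j)
      else 0)"

end

(* Upper bounds: by Schur's test, any positive weight v with |B| v <= l v, where |B| is the
   entrywise modulus of B (a weighted path adjacency matrix), gives ||B|| <= l.  The constant
   weight yields the maximal row sum max (|b_i| + |b_(i+1)|); the sine weight of the path graph
   yields 2 cos (pi/(n+1)) max |b_i|.
   Lower bounds: B maps the basis vector e_(i+1) to b_i e_i - cnj b_(i+1) e_(i+2).  And if x has
   entries of modulus 1/sqrt n whose phases make every cnj x_k b_k x_(k+1) equal to i |b_k| / n,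
   then the quadratic form <x, B x> has modulus (2/n) sum |b_k|, which is at most ||B||.
*)

theory Submission
  imports Defs
begin

lemma vec_norm_eq_L2_set: "vec_norm n x = L2_set (\<lambda>i. cmod (x i)) {..<n}"
  by (simp add: vec_norm_def L2_set_def)

lemma vec_norm_nonneg: "0 \<le> vec_norm n x"
  by (simp add: vec_norm_eq_L2_set)

lemma vec_norm_mat_vec_le_Frobenius:
  "vec_norm n (mat_vec n A x) \<le> sqrt (\<Sum>i<n. \<Sum>j<n. (cmod (A i j))\<^sup>2) * vec_norm n x"
proof -
  have "(cmod (mat_vec n A x i))\<^sup>2 \<le> (\<Sum>j<n. (cmod (A i j))\<^sup>2) * (vec_norm n x)\<^sup>2" for i
  proof -
    have "cmod (mat_vec n A x i) \<le> (\<Sum>j<n. cmod (A i j) * cmod (x j))"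
      unfolding mat_vec_def by (rule order_trans[OF norm_sum]) (simp add: norm_mult)
    also have "\<dots> \<le> L2_set (\<lambda>j. cmod (A i j)) {..<n} * vec_norm n x"
      using L2_set_mult_ineq[of "\<lambda>j. cmod (A i j)" "\<lambda>j. cmod (x j)" "{..<n}"]
      by (simp add: vec_norm_eq_L2_set)
    finally have "(cmod (mat_vec n A x i))\<^sup>2 \<le> (L2_set (\<lambda>j. cmod (A i j)) {..<n} * vec_norm n x)\<^sup>2"
      by (rule power_mono) simp
    then show ?thesis
      by (simp add: power_mult_distrib L2_set_def sum_nonneg)
  qed
  then have "(\<Sum>i<n. (cmod (mat_vec n A x i))\<^sup>2) \<le> (\<Sum>i<n. \<Sum>j<n. (cmod (A i j))\<^sup>2) * (vec_norm n x)\<^sup>2"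
    unfolding sum_distrib_right by (rule sum_mono)
  then have "vec_norm n (mat_vec n A x) \<le> sqrt ((\<Sum>i<n. \<Sum>j<n. (cmod (A i j))\<^sup>2) * (vec_norm n x)\<^sup>2)"
    unfolding vec_norm_def by (rule real_sqrt_le_mono)
  then show ?thesis
    by (simp add: real_sqrt_mult vec_norm_nonneg)
qed

lemma bdd_above_op_norm_set: "bdd_above {vec_norm n (mat_vec n A x) | x. vec_norm n x \<le> 1}"
proof (rule bdd_aboveI)
  let ?F = "sqrt (\<Sum>i<n. \<Sum>j<n. (cmod (A i j))\<^sup>2)"
  fix y assume "y \<in> {vec_norm n (mat_vec n A x) | x. vec_norm n x \<le> 1}"
  then obtain x where "y = vec_norm n (mat_vec n A x)" "vec_norm n x \<le> 1"
    by blast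
  moreover have "?F * vec_norm n x \<le> ?F"
    using \<open>vec_norm n x \<le> 1\<close> by (simp add: mult_left_le sum_nonneg)
  ultimately show "y \<le> ?F"
    using vec_norm_mat_vec_le_Frobenius[of n A x] by linarith
qed

lemma vec_norm_le_op_norm:
  assumes "vec_norm n x \<le> 1"
  shows "vec_norm n (mat_vec n A x) \<le> op_norm n A"
  unfolding op_norm_def using assms by (intro cSup_upper bdd_above_op_norm_set) blast

lemma op_norm_le:
  assumes "\<And>x. vec_norm n (mat_vec n A x) \<le> l * vec_norm n x" and "0 \<le> l"
  shows "op_norm n A \<le> l"
  unfolding op_norm_def
proof (rule cSup_least)
  show "{vec_norm n (mat_vec n A x) | x. vec_norm n x \<le> 1} \<noteq> {}"
    by (auto intro!: exI[of _ "\<lambda>_. 0"] simp: vec_norm_def)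
  fix y assume "y \<in> {vec_norm n (mat_vec n A x) | x. vec_norm n x \<le> 1}"
  then obtain x where "y = vec_norm n (mat_vec n A x)" "vec_norm n x \<le> 1"
    by blast
  then show "y \<le> l"
    using assms(1)[of x] mult_left_le[of "vec_norm n x" l] \<open>0 \<le> l\<close> vec_norm_nonneg[of n x] by linarith
qed

lemma cmod_quadratic_form_le_op_norm:
  assumes "vec_norm n x \<le> 1"
  shows "cmod (\<Sum>i<n. cnj (x i) * mat_vec n A x i) \<le> op_norm n A"
proof -
  have "cmod (\<Sum>i<n. cnj (x i) * mat_vec n A x i) \<le> (\<Sum>i<n. \<bar>cmod (x i)\<bar> * \<bar>cmod (mat_vec n A x i)\<bar>)"
    by (rule order_trans[OF norm_sum]) (simp add: norm_mult)
  also have "\<dots> \<le> vec_norm n x * vec_norm n (mat_vec n A x)"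
    unfolding vec_norm_eq_L2_set by (rule L2_set_mult_ineq)
  also have "\<dots> \<le> vec_norm n (mat_vec n A x)"
    using assms by (simp add: mult_left_le_one_le vec_norm_nonneg)
  also have "\<dots> \<le> op_norm n A"
    using assms by (rule vec_norm_le_op_norm)
  finally show ?thesis .
qed

lemma weighted_Cauchy_Schwarz:
  fixes a v y :: "'a \<Rightarrow> real"
  assumes a: "\<And>j. j \<in> J \<Longrightarrow> 0 \<le> a j" and v: "\<And>j. j \<in> J \<Longrightarrow> 0 < v j"
  shows "(\<Sum>j\<in>J. a j * y j)\<^sup>2 \<le> (\<Sum>j\<in>J. a j * v j) * (\<Sum>j\<in>J. a j * (y j)\<^sup>2 / v j)"
proof -
  let ?p = "\<lambda>j. sqrt (a j * v j)" and ?q = "\<lambda>j. sqrt (a j / v j) * y j"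
  have "a j * y j = ?p j * ?q j" if "j \<in> J" for j
  proof -
    have "?p j * sqrt (a j / v j) = sqrt ((a j)\<^sup>2)"
      using v[OF that] by (simp add: real_sqrt_mult[symmetric] power2_eq_square)
    then show ?thesis
      using a[OF that] by (simp add: mult.assoc[symmetric])
  qed
  then have "(\<Sum>j\<in>J. a j * y j)\<^sup>2 = (\<Sum>j\<in>J. ?p j * ?q j)\<^sup>2"
    by (metis (no_types, lifting) sum.cong)
  also have "\<dots> \<le> (\<Sum>j\<in>J. (?p j)\<^sup>2) * (\<Sum>j\<in>J. (?q j)\<^sup>2)"
    by (rule Cauchy_Schwarz_ineq_sum)
  also have "\<dots> = (\<Sum>j\<in>J. a j * v j) * (\<Sum>j\<in>J. a j * (y j)\<^sup>2 / v j)"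
    using a v by (intro arg_cong2[where f = "(*)"] sum.cong) (auto simp: power_mult_distrib less_imp_le)
  finally show ?thesis .
qed

lemma Schur_test:
  fixes A :: "nat \<Rightarrow> nat \<Rightarrow> real" and v y :: "nat \<Rightarrow> real"
  assumes A_nonneg: "\<And>i j. i < n \<Longrightarrow> j < n \<Longrightarrow> 0 \<le> A i j"
    and A_sym: "\<And>i j. i < n \<Longrightarrow> j < n \<Longrightarrow> A i j = A j i"
    and v_pos: "\<And>j. j < n \<Longrightarrow> 0 < v j"
    and row: "\<And>i. i < n \<Longrightarrow> (\<Sum>j<n. A i j * v j) \<le> l * v i"
    and "0 \<le> l"
  shows "(\<Sum>i<n. (\<Sum>j<n. A i j * y j)\<^sup>2) \<le> l\<^sup>2 * (\<Sum>i<n. (y i)\<^sup>2)"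
proof -
  have "(\<Sum>i<n. (\<Sum>j<n. A i j * y j)\<^sup>2) \<le> (\<Sum>i<n. l * v i * (\<Sum>j<n. A i j * (y j)\<^sup>2 / v j))"
  proof (rule sum_mono)
    fix i assume i: "i \<in> {..<n}"
    have "0 \<le> (\<Sum>j<n. A i j * (y j)\<^sup>2 / v j)"
      using i A_nonneg v_pos by (intro sum_nonneg) (simp add: less_imp_le)
    moreover have "(\<Sum>j<n. A i j * y j)\<^sup>2 \<le> (\<Sum>j<n. A i j * v j) * (\<Sum>j<n. A i j * (y j)\<^sup>2 / v j)"
      using i A_nonneg v_pos by (intro weighted_Cauchy_Schwarz) auto
    ultimately show "(\<Sum>j<n. A i j * y j)\<^sup>2 \<le> l * v i * (\<Sum>j<n. A i j * (y j)\<^sup>2 / v j)"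
      using i row by (meson lessThan_iff mult_right_mono order_trans)
  qed
  also have "\<dots> = l * (\<Sum>j<n. (y j)\<^sup>2 / v j * (\<Sum>i<n. A j i * v i))"
    unfolding sum_distrib_left sum_distrib_right
    by (subst sum.swap) (auto intro!: sum.cong simp: A_sym)
  also have "\<dots> \<le> l * (\<Sum>j<n. (y j)\<^sup>2 / v j * (l * v j))"
    using row v_pos \<open>0 \<le> l\<close> by (intro mult_left_mono sum_mono) (auto simp: less_imp_le)
  also have "\<dots> = l\<^sup>2 * (\<Sum>i<n. (y i)\<^sup>2)"
    unfolding sum_distrib_left power2_eq_square
    using v_pos by (intro sum.cong) (auto simp: less_imp_neq[symmetric])
  finally show ?thesis .
qed

lemma op_norm_le_Schur_test:
  assumes sym: "\<And>i j. i < n \<Longrightarrow> j < n \<Longrightarrow> cmod (A i j) = cmod (A j i)"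
    and v_pos: "\<And>j. j < n \<Longrightarrow> 0 < v j"
    and row: "\<And>i. i < n \<Longrightarrow> (\<Sum>j<n. cmod (A i j) * v j) \<le> l * v i"
    and "0 \<le> l"
  shows "op_norm n A \<le> l"
proof (rule op_norm_le[OF _ \<open>0 \<le> l\<close>])
  fix x
  have "(\<Sum>i<n. (cmod (mat_vec n A x i))\<^sup>2) \<le> (\<Sum>i<n. (\<Sum>j<n. cmod (A i j) * cmod (x j))\<^sup>2)"
    unfolding mat_vec_def
    by (intro sum_mono power_mono order_trans[OF norm_sum]) (auto simp: norm_mult)
  also have "\<dots> \<le> l\<^sup>2 * (\<Sum>i<n. (cmod (x i))\<^sup>2)"
    using sym v_pos row \<open>0 \<le> l\<close> by (intro Schur_test[where v = v]) auto
  finally show "vec_norm n (mat_vec n A x) \<le> l * vec_norm n x"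
    using \<open>0 \<le> l\<close> unfolding vec_norm_def
    by (metis real_sqrt_abs real_sqrt_le_mono real_sqrt_mult abs_of_nonneg)
qed

lemma mat_vec_tridiag:
  assumes "i < n"
  shows "mat_vec n (tridiag n b) x i =
    (if i + 1 < n then b i * x (i + 1) else 0) - (if 0 < i then cnj (b (i - 1)) * x (i - 1) else 0)"
proof -
  have "tridiag n b i j * x j =
      (if j = i + 1 then (if i + 1 < n then b i * x j else 0) else 0)
    - (if j = i - 1 then (if 0 < i then cnj (b (i - 1)) * x j else 0) else 0)" for j
    using assms by (auto simp: tridiag_def)
  then show ?thesis
    using assms by (auto simp: mat_vec_def sum_subtractf sum.delta)
qed

lemma tridiag_abs_row_sum:
  assumes "i < n"
  shows "(\<Sum>j<n. cmod (tridiag n b i j) * f j) =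
    (if i + 1 < n then cmod (b i) * f (i + 1) else 0) + (if 0 < i then cmod (b (i - 1)) * f (i - 1) else 0)"
proof -
  have "cmod (tridiag n b i j) * f j =
      (if j = i + 1 then (if i + 1 < n then cmod (b i) * f j else 0) else 0)
    + (if j = i - 1 then (if 0 < i then cmod (b (i - 1)) * f j else 0) else 0)" for j
    using assms by (auto simp: tridiag_def)
  then show ?thesis
    using assms by (auto simp: sum.distrib sum.delta)
qed

lemma cmod_tridiag_commute: "cmod (tridiag n b i j) = cmod (tridiag n b j i)"
  by (auto simp: tridiag_def)

lemma op_norm_tridiag_le_weighted:
  assumes "\<And>j. j < n \<Longrightarrow> 0 < v j" and "0 \<le> l"
    and "\<And>i. i < n \<Longrightarrow>
      (if i + 1 < n then cmod (b i) * v (i + 1) else 0) + (if 0 < i then cmod (b (i - 1)) * v (i - 1) else 0)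
        \<le> l * v i"
  shows "op_norm n (tridiag n b) \<le> l"
  using assms by (intro op_norm_le_Schur_test[where v = v]) (auto simp: tridiag_abs_row_sum cmod_tridiag_commute)

lemma op_norm_tridiag_le_adjacent_sum:
  assumes "3 \<le> n" and m: "\<And>i. i + 2 < n \<Longrightarrow> cmod (b i) + cmod (b (i + 1)) \<le> m"
  shows "op_norm n (tridiag n b) \<le> m"
proof (rule op_norm_tridiag_le_weighted[where v = "\<lambda>_. 1"])
  have "cmod (b 0) + cmod (b 1) \<le> m"
    using m[of 0] \<open>3 \<le> n\<close> by simp
  then have first: "cmod (b 0) \<le> m"
    using norm_ge_zero[of "b 1"] by linarith
  have "n - 3 + 2 < n" and "n - 3 + 1 = n - 2"
    using \<open>3 \<le> n\<close> by arith+
  then have "cmod (b (n - 3)) + cmod (b (n - 2)) \<le> m"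
    using m[of "n - 3"] by simp
  then have last: "cmod (b (n - 2)) \<le> m"
    using norm_ge_zero[of "b (n - 3)"] by linarith
  show "0 \<le> m"
    using first norm_ge_zero[of "b 0"] by linarith
  fix i assume "i < n"
  then consider "i = 0" | "0 < i" "i + 1 < n" | "i = n - 1"
    by linarith
  then show "(if i + 1 < n then cmod (b i) * 1 else 0) + (if 0 < i then cmod (b (i - 1)) * 1 else 0) \<le> m * 1"
  proof cases
    case 2
    then show ?thesis
      using m[of "i - 1"] by simp
  qed (use first last \<open>3 \<le> n\<close> in \<open>auto simp: numeral_eq_Suc\<close>)
qed simp

text \<open>The weight \<open>v j = sin ((j + 1) h)\<close> is the Perron eigenvector of the path graph on \<open>n\<close>
  vertices, with eigenvalue \<open>2 cos h\<close>; the boundary terms vanish because \<open>sin 0 = sin ((n + 1) h) = 0\<close>.\<close>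
lemma op_norm_tridiag_le_cos:
  assumes "1 \<le> n" and m: "\<And>i. i + 1 < n \<Longrightarrow> cmod (b i) \<le> m" and "0 \<le> m"
  shows "op_norm n (tridiag n b) \<le> 2 * cos (pi / real (n + 1)) * m"
proof -
  define h where "h = pi / real (n + 1)"
  have sin_pos: "0 < sin (real k * h)" if "0 < k" "k < n + 1" for k
  proof (rule sin_gt_zero)
    show "0 < real k * h"
      using that by (simp add: h_def)
    have "real k * h < real (n + 1) * h"
      using that by (intro mult_strict_right_mono) (auto simp: h_def)
    then show "real k * h < pi"
      by (simp add: h_def)
  qed
  have "0 \<le> cos h"
    using \<open>1 \<le> n\<close> by (intro cos_ge_zero) (auto simp: h_def field_simps)
  have "op_norm n (tridiag n b) \<le> 2 * cos h * m"
  proof (rule op_norm_tridiag_le_weighted[where v = "\<lambda>j. sin (real (j + 1) * h)"])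
    show "0 < sin (real (j + 1) * h)" if "j < n" for j
      using that by (intro sin_pos) auto
    show "0 \<le> 2 * cos h * m"
      using \<open>0 \<le> cos h\<close> \<open>0 \<le> m\<close> by simp
    fix i assume "i < n"
    have right: "(if i + 1 < n then cmod (b i) * sin (real (i + 1 + 1) * h) else 0)
        \<le> m * sin (real (i + 1) * h + h)"
    proof (cases "i + 1 < n")
      case True
      then show ?thesis
        using m[of i] sin_pos[of "i + 2"] by (auto simp: algebra_simps intro: mult_right_mono)
    next
      case False
      then have "n = i + 1"
        using \<open>i < n\<close> by simp
      then have "real (i + 1) * h + h = real (n + 1) * h"
        by (simp add: algebra_simps)
      also have "\<dots> = pi"
        by (simp add: h_def)
      finally show ?thesis
        using False by simp
    qed
    have left: "(if 0 < i then cmod (b (i - 1)) * sin (real (i - 1 + 1) * h) else 0)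
        \<le> m * sin (real (i + 1) * h - h)"
      using m[of "i - 1"] sin_pos[of i] \<open>i < n\<close>
      by (auto simp: algebra_simps intro: mult_right_mono)
    have "m * sin (real (i + 1) * h + h) + m * sin (real (i + 1) * h - h)
        = 2 * cos h * m * sin (real (i + 1) * h)"
    proof -
      have "sin (x + h) + sin (x - h) = 2 * cos h * sin x" for x
        by (simp add: sin_add sin_diff)
      then show ?thesis
        by (metis distrib_left mult.assoc mult.commute)
    qed
    then show "(if i + 1 < n then cmod (b i) * sin (real (i + 1 + 1) * h) else 0)
        + (if 0 < i then cmod (b (i - 1)) * sin (real (i - 1 + 1) * h) else 0)
        \<le> 2 * cos h * m * sin (real (i + 1) * h)"
      using left right by linarith
  qed
  then show ?thesis
    by (simp add: h_def)
qed

lemma sqrt_adjacent_le_op_norm_tridiag: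
  assumes "i + 2 < n"
  shows "sqrt ((cmod (b i))\<^sup>2 + (cmod (b (i + 1)))\<^sup>2) \<le> op_norm n (tridiag n b)"
proof -
  define x :: "nat \<Rightarrow> complex" where "x j = (if j = i + 1 then 1 else 0)" for j
  have "(cmod (x k))\<^sup>2 = (if k = i + 1 then 1 else 0)" for k
    by (simp add: x_def)
  then have "vec_norm n x = 1"
    using assms by (simp add: vec_norm_def sum.delta)
  have "(cmod (mat_vec n (tridiag n b) x k))\<^sup>2 =
      (if k = i then (cmod (b i))\<^sup>2 else 0) + (if k = i + 2 then (cmod (b (i + 1)))\<^sup>2 else 0)"
    if "k < n" for k
    using assms that by (auto simp: mat_vec_tridiag x_def)
  then have "vec_norm n (mat_vec n (tridiag n b) x) = sqrt ((cmod (b i))\<^sup>2 + (cmod (b (i + 1)))\<^sup>2)"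
    using assms by (simp add: vec_norm_def sum.distrib sum.delta)
  then show ?thesis
    using vec_norm_le_op_norm[of n x "tridiag n b"] \<open>vec_norm n x = 1\<close> by simp
qed

lemma tridiag_quadratic_form:
  "(\<Sum>k<n. cnj (x k) * mat_vec n (tridiag n b) x k) =
   (\<Sum>k<n - 1. cnj (x k) * b k * x (k + 1) - cnj (cnj (x k) * b k * x (k + 1)))"
proof (cases n)
  case 0
  then show ?thesis by simp
next
  case (Suc m)
  have "(\<Sum>k<n. cnj (x k) * mat_vec n (tridiag n b) x k) =
      (\<Sum>k<Suc m. if k < m then cnj (x k) * b k * x (k + 1) else 0)
    - (\<Sum>k<Suc m. if 0 < k then cnj (x k) * cnj (b (k - 1)) * x (k - 1) else 0)"
    unfolding sum_subtractf[symmetric] using Suc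
    by (intro sum.cong) (auto simp: mat_vec_tridiag right_diff_distrib mult.assoc)
  also have "\<dots> = (\<Sum>k<m. cnj (x k) * b k * x (k + 1)) - (\<Sum>k<m. cnj (x (k + 1)) * cnj (b k) * x k)"
    by (simp only: sum.lessThan_Suc_shift[where n = m and
          g = "\<lambda>k. if 0 < k then cnj (x k) * cnj (b (k - 1)) * x (k - 1) else 0"]) simp
  also have "\<dots> = (\<Sum>k<m. cnj (x k) * b k * x (k + 1) - cnj (cnj (x k) * b k * x (k + 1)))"
    by (simp add: sum_subtractf ac_simps)
  finally show ?thesis
    using Suc by simp
qed

lemma unimodular_phases:
  obtains w :: "nat \<Rightarrow> complex"
  where "\<And>k. cmod (w k) = 1" and "\<And>k. cnj (w k) * b k * w (k + 1) = \<i> * cmod (b k)"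
proof
  define u where "u k = (if b k = 0 then 1 else \<i> * cnj (b k) / cmod (b k))" for k
  define w where "w k = (\<Prod>j<k. u j)" for k
  have "cmod (u k) = 1" for k
    by (simp add: u_def norm_mult norm_divide)
  then show w_unit: "cmod (w k) = 1" for k
    by (simp add: w_def flip: prod_norm)
  have "b k * u k = \<i> * cmod (b k)" for k
    using complex_norm_square[of "b k"]
    by (auto simp: u_def power2_eq_square field_simps)
  moreover have "cnj (w k) * w k = 1" for k
    using complex_norm_square[of "w k"] w_unit[of k] by (simp add: mult.commute)
  ultimately show "cnj (w k) * b k * w (k + 1) = \<i> * cmod (b k)" for k
    by (simp add: w_def ac_simps)
qed

lemma mean_le_op_norm_tridiag:
  assumes "1 \<le> n"
  shows "2 / real n * (\<Sum>i<n - 1. cmod (b i)) \<le> op_norm n (tridiag n b)"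
proof -
  obtain w where w_unit: "\<And>k. cmod (w k) = 1"
    and w_phase: "\<And>k. cnj (w k) * b k * w (k + 1) = \<i> * cmod (b k)"
    using unimodular_phases[of b] by blast
  define x where "x k = w k / sqrt (real n)" for k
  have "vec_norm n x = 1"
    using assms by (simp add: vec_norm_def x_def norm_divide w_unit power_divide)
  have "cnj (x k) * b k * x (k + 1) = \<i> * of_real (cmod (b k) / real n)" for k
    using w_phase[of k] assms
    by (simp add: x_def field_simps flip: of_real_mult)
  then have "(\<Sum>k<n. cnj (x k) * mat_vec n (tridiag n b) x k) =
      \<i> * of_real (2 / real n * (\<Sum>k<n - 1. cmod (b k)))"
    by (simp add: tridiag_quadratic_form sum_distrib_left ac_simps)
  then have "2 / real n * (\<Sum>k<n - 1. cmod (b k)) = cmod (\<Sum>k<n. cnj (x k) * mat_vec n (tridiag n b) x k)"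
    by (simp add: norm_mult norm_divide sum_nonneg flip: of_real_sum)
  also have "\<dots> \<le> op_norm n (tridiag n b)"
    using \<open>vec_norm n x = 1\<close> by (intro cmod_quadratic_form_le_op_norm) simp
  finally show ?thesis .
qed

theorem mainTheorem3:
  fixes n :: nat and b :: "nat \<Rightarrow> complex"
  assumes "n \<ge> 3"
  shows "(MAX i\<in>{..<n-2}. sqrt ((cmod (b i))\<^sup>2 + (cmod (b (i+1)))\<^sup>2)) \<le> op_norm n (tridiag n b)
       \<and> 2 / real n * (\<Sum>i<n-1. cmod (b i)) \<le> op_norm n (tridiag n b)
       \<and> op_norm n (tridiag n b) \<le> (MAX i\<in>{..<n-2}. cmod (b i) + cmod (b (i+1)))
       \<and> op_norm n (tridiag n b) \<le> 2 * cos (pi / real (n + 1)) * (MAX i\<in>{..<n-1}. cmod (b i))"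
proof (intro conjI)
  show "(MAX i\<in>{..<n-2}. sqrt ((cmod (b i))\<^sup>2 + (cmod (b (i+1)))\<^sup>2)) \<le> op_norm n (tridiag n b)"
    using assms sqrt_adjacent_le_op_norm_tridiag[where n = n and b = b]
    by (intro Max.boundedI) (auto simp: lessThan_empty_iff)
  show "2 / real n * (\<Sum>i<n-1. cmod (b i)) \<le> op_norm n (tridiag n b)"
    using assms by (intro mean_le_op_norm_tridiag) simp
  show "op_norm n (tridiag n b) \<le> (MAX i\<in>{..<n-2}. cmod (b i) + cmod (b (i+1)))"
    using assms by (intro op_norm_tridiag_le_adjacent_sum Max_ge) auto
  have "cmod (b i) \<le> (MAX i\<in>{..<n-1}. cmod (b i))" if "i + 1 < n" for i
    using that by (intro Max_ge) auto
  moreover have "0 \<le> (MAX i\<in>{..<n-1}. cmod (b i))"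
    using calculation[of 0] assms norm_ge_zero[of "b 0"] by linarith
  ultimately show "op_norm n (tridiag n b) \<le> 2 * cos (pi / real (n + 1)) * (MAX i\<in>{..<n-1}. cmod (b i))"
    using assms by (intro op_norm_tridiag_le_cos) auto
qed

end
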